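(* $\mathrm{HS}_{\mathsf{lin}}$ is at least exponentially more succinct than $\mathrm{LTL}$: there is a family of $\mathrm{HS}$ formulas $(\psi_n)_{n\ge1}$ such that, for every $n$, no $\mathrm{LTL}$ formula equivalent to $\psi_n$ (equivalence meaning: for every finite Kripke structure $K$, $K\models_{\mathsf{lin}}\psi_n$ iff $K\models\varphi$) has size bounded by a polynomial in $|\psi_n|$.
   Context: A Kripke structure over a finite set $\mathcal{AP}$ of proposition letters is $K=(\mathcal{AP},S,\delta,\mu,s_0)$ with state set $S$, left-total transition relation $\delta\subseteq S\times S$, labelling $\mu:S\to 2^{\mathcal{AP}}$, initial state $s_0$; $K$ is finite if $S$ is finite. An infinite path is an infinite sequence $\pi$ of states with $(\pi(i),\pi(i+1))\in\delta$; it is initial if $\pi(0)=s_0$. The size $|\varphi|$ of a formula is its number of symbols/subformulas. $\mathrm{HS}$ formulas: $\psi::=p\mid\neg\psi\mid\psi\wedge\psi\mid\langle X\rangle\psi$, $X$ ranging over the Allen relations $A,L,B,E,D,O$ and their inverses $\bar A,\dots,\bar O$; $[X]\psi:=\neg\langle X\rangle\neg\psi$. Under the non-strict semantics all modalities are definable from $\langle B\rangle,\langle E\rangle,\langle\bar B\rangle,\langle\bar E\rangle$. Trace-based semantics: for an infinite path $\pi$, intervals are $[i,j]$ with $0\le i\le j$; $[i,j]\models p$ iff $p\in\mu(\pi(h))$ for all $i\le h\le j$; $[x,y]\models\langle B\rangle\psi$ iff $[x,z]\models\psi$ for some $x\le z<y$; $[x,y]\models\langle E\rangle\psi$ iff $[v,y]\models\psi$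 for some $x<v\le y$; $[x,y]\models\langle\bar B\rangle\psi$ iff $[x,z]\models\psi$ for some $z>y$; $[x,y]\models\langle\bar E\rangle\psi$ iff $[v,y]\models\psi$ for some $v<x$. $K\models_{\mathsf{lin}}\psi$ iff for every initial infinite path $\pi$ and every $i\ge0$, $[0,i]\models\psi$ in $\pi$; $\mathrm{HS}_{\mathsf{lin}}$ is $\mathrm{HS}$ under this semantics. $\mathrm{LTL}$: $\varphi::=\top\mid p\mid\neg\varphi\mid\varphi\wedge\varphi\mid\mathsf X\varphi\mid\varphi\,\mathsf U\,\varphi$ with the standard semantics over infinite paths; $K\models\varphi$ iff $\pi,0\models\varphi$ for every initial infinite path $\pi$. *)

theory Defs
  imports Main
begin

text \<open>Proposition letters and states are natural numbers (any finite structure is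
isomorphic to one whose states are naturals).\<close>

record kripke =
  AP   :: "nat set"
  St   :: "nat set"
  Tr   :: "(nat \<times> nat) set"
  Lab  :: "nat \<Rightarrow> nat set"
  Init :: nat

definition kripke_structure :: "kripke \<Rightarrow> bool" where
  "kripke_structure K \<longleftrightarrow>
     finite (AP K) \<and> Init K \<in> St K \<and> Tr K \<subseteq> St K \<times> St K \<and>
     (\<forall>s\<in>St K. \<exists>t. (s, t) \<in> Tr K) \<and> (\<forall>s\<in>St K. Lab K s \<subseteq> AP K)"

definition finite_kripke :: "kripke \<Rightarrow> bool" where
  "finite_kripke K \<longleftrightarrow> kripke_structure K \<and> finite (St K)"

definition initial_path :: "kripke \<Rightarrow> (nat \<Rightarrow> nat) \<Rightarrow> bool" where
  "initial_path K \<pi> \<longleftrightarrow> \<pi> 0 = Init K \<and> (\<forall>i. (\<pi> i, \<pi> (Suc i)) \<in> Tr K)"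

datatype allen = RA | RL | RB | RE | RD | RO | RAbar | RLbar | RBbar | REbar | RDbar | RObar

datatype hs = HProp nat | HNot hs | HAnd hs hs | HDia allen hs

fun hs_size :: "hs \<Rightarrow> nat" where
  "hs_size (HProp p) = 1"
| "hs_size (HNot f) = 1 + hs_size f"
| "hs_size (HAnd f g) = 1 + hs_size f + hs_size g"
| "hs_size (HDia X f) = 1 + hs_size f"

fun hs_props :: "hs \<Rightarrow> nat set" where
  "hs_props (HProp p) = {p}"
| "hs_props (HNot f) = hs_props f"
| "hs_props (HAnd f g) = hs_props f \<union> hs_props g"
| "hs_props (HDia X f) = hs_props f"

text \<open>Trace-based semantics on intervals [x,y], x \<le> y, of an infinite path.\<close>
fun hs_sat :: "kripke \<Rightarrow> (nat \<Rightarrow> nat) \<Rightarrow> nat \<Rightarrow> nat \<Rightarrow> hs \<Rightarrow> bool" where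
  "hs_sat K \<pi> x y (HProp p) = (\<forall>h. x \<le> h \<and> h \<le> y \<longrightarrow> p \<in> Lab K (\<pi> h))"
| "hs_sat K \<pi> x y (HNot f) = (\<not> hs_sat K \<pi> x y f)"
| "hs_sat K \<pi> x y (HAnd f g) = (hs_sat K \<pi> x y f \<and> hs_sat K \<pi> x y g)"
| "hs_sat K \<pi> x y (HDia X f) = (case X of
      RA \<Rightarrow> (\<exists>v. y \<le> v \<and> hs_sat K \<pi> y v f)
    | RAbar \<Rightarrow> (\<exists>v. v \<le> x \<and> hs_sat K \<pi> v x f)
    | RL \<Rightarrow> (\<exists>z v. y < z \<and> z \<le> v \<and> hs_sat K \<pi> z v f)
    | RLbar \<Rightarrow> (\<exists>z v. z \<le> v \<and> v < x \<and> hs_sat K \<pi> z v f)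
    | RB \<Rightarrow> (\<exists>z. x \<le> z \<and> z < y \<and> hs_sat K \<pi> x z f)
    | RBbar \<Rightarrow> (\<exists>z. y < z \<and> hs_sat K \<pi> x z f)
    | RE \<Rightarrow> (\<exists>v. x < v \<and> v \<le> y \<and> hs_sat K \<pi> v y f)
    | REbar \<Rightarrow> (\<exists>v. v < x \<and> hs_sat K \<pi> v y f)
    | RD \<Rightarrow> (\<exists>v z. x < v \<and> v \<le> z \<and> z < y \<and> hs_sat K \<pi> v z f)
    | RDbar \<Rightarrow> (\<exists>v z. v < x \<and> y < z \<and> hs_sat K \<pi> v z f)
    | RO \<Rightarrow> (\<exists>v z. x < v \<and> v \<le> y \<and> y < z \<and> hs_sat K \<pi> v z f)
    | RObar \<Rightarrow> (\<exists>v z. v < x \<and> x \<le> z \<and> z < y \<and> hs_sat K \<pi> v z f))"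

definition hs_lin_models :: "kripke \<Rightarrow> hs \<Rightarrow> bool" where
  "hs_lin_models K \<psi> \<longleftrightarrow> (\<forall>\<pi>. initial_path K \<pi> \<longrightarrow> (\<forall>i. hs_sat K \<pi> 0 i \<psi>))"

datatype ltl = LTrue | LProp nat | LNot ltl | LAnd ltl ltl | LNext ltl | LUntil ltl ltl

fun ltl_size :: "ltl \<Rightarrow> nat" where
  "ltl_size LTrue = 1"
| "ltl_size (LProp p) = 1"
| "ltl_size (LNot f) = 1 + ltl_size f"
| "ltl_size (LAnd f g) = 1 + ltl_size f + ltl_size g"
| "ltl_size (LNext f) = 1 + ltl_size f"
| "ltl_size (LUntil f g) = 1 + ltl_size f + ltl_size g"

fun ltl_sat :: "kripke \<Rightarrow> (nat \<Rightarrow> nat) \<Rightarrow> nat \<Rightarrow> ltl \<Rightarrow> bool" where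
  "ltl_sat K \<pi> i LTrue = True"
| "ltl_sat K \<pi> i (LProp p) = (p \<in> Lab K (\<pi> i))"
| "ltl_sat K \<pi> i (LNot f) = (\<not> ltl_sat K \<pi> i f)"
| "ltl_sat K \<pi> i (LAnd f g) = (ltl_sat K \<pi> i f \<and> ltl_sat K \<pi> i g)"
| "ltl_sat K \<pi> i (LNext f) = ltl_sat K \<pi> (Suc i) f"
| "ltl_sat K \<pi> i (LUntil f g) =
     (\<exists>j\<ge>i. ltl_sat K \<pi> j g \<and> (\<forall>k. i \<le> k \<and> k < j \<longrightarrow> ltl_sat K \<pi> k f))"

definition ltl_models :: "kripke \<Rightarrow> ltl \<Rightarrow> bool" where
  "ltl_models K \<phi> \<longleftrightarrow> (\<forall>\<pi>. initial_path K \<pi> \<longrightarrow> ltl_sat K \<pi> 0 \<phi>)"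

definition hs_ltl_equiv :: "hs \<Rightarrow> ltl \<Rightarrow> bool" where
  "hs_ltl_equiv \<psi> \<phi> \<longleftrightarrow>
     (\<forall>K. finite_kripke K \<and> hs_props \<psi> \<subseteq> AP K \<longrightarrow> (hs_lin_models K \<psi> \<longleftrightarrow> ltl_models K \<phi>))"

end

theory Submission
  imports Defs
begin

(* \<psi>_n says: if the first and last state of a prefix agree on p_1, ..., p_n, they agree on p_0.
   For a set T of valuations of p_1, ..., p_n, take the word that starts with a letter a and then
   lists every valuation v, adding p_0 exactly when v \<in> T (and stutters on its last letter).
   For a = v \<union> {p_0} the formula \<psi>_n holds iff v \<in> T.  The truth of an LTL formula \<phi> at
   position 0 depends only on the first letter and on the set of subformulas of \<phi> true at
   position 1, which does not depend on a.  So an LTL formula equivalent to \<psi>_n separates all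
   2^(2^n) sets T by subsets of its subformulas, whence |\<phi>| \<ge> 2^n, while |\<psi>_n| = 18n + 15. *)

fun word_sat :: "(nat \<Rightarrow> nat set) \<Rightarrow> nat \<Rightarrow> ltl \<Rightarrow> bool" where
  "word_sat w i LTrue = True"
| "word_sat w i (LProp p) = (p \<in> w i)"
| "word_sat w i (LNot f) = (\<not> word_sat w i f)"
| "word_sat w i (LAnd f g) = (word_sat w i f \<and> word_sat w i g)"
| "word_sat w i (LNext f) = word_sat w (Suc i) f"
| "word_sat w i (LUntil f g) =
     (\<exists>j\<ge>i. word_sat w j g \<and> (\<forall>k. i \<le> k \<and> k < j \<longrightarrow> word_sat w k f))"

lemma ltl_sat_eq_word_sat: "ltl_sat K \<pi> i \<phi> = word_sat (\<lambda>j. Lab K (\<pi> j)) i \<phi>"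
  by (induction \<phi> arbitrary: i) auto

lemma word_sat_cong: "(\<And>j. i \<le> j \<Longrightarrow> w j = w' j) \<Longrightarrow> word_sat w i \<phi> = word_sat w' i \<phi>"
proof (induction \<phi> arbitrary: i)
  case (LUntil f g)
  have "word_sat w k f = word_sat w' k f" "word_sat w k g = word_sat w' k g" if "i \<le> k" for k
    using LUntil that by auto
  then show ?case by (auto intro!: ex_cong)
qed auto

lemma word_sat_Until_unfold:
  "word_sat w i (LUntil f g) \<longleftrightarrow> word_sat w i g \<or> word_sat w i f \<and> word_sat w (Suc i) (LUntil f g)"
  by (auto simp: Suc_le_eq) (fastforce simp: le_less)+

fun ltl_subformulas :: "ltl \<Rightarrow> ltl set" where
  "ltl_subformulas LTrue = {LTrue}"
| "ltl_subformulas (LProp p) = {LProp p}"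
| "ltl_subformulas (LNot f) = insert (LNot f) (ltl_subformulas f)"
| "ltl_subformulas (LAnd f g) = insert (LAnd f g) (ltl_subformulas f \<union> ltl_subformulas g)"
| "ltl_subformulas (LNext f) = insert (LNext f) (ltl_subformulas f)"
| "ltl_subformulas (LUntil f g) = insert (LUntil f g) (ltl_subformulas f \<union> ltl_subformulas g)"

lemma finite_ltl_subformulas: "finite (ltl_subformulas \<phi>)"
  by (induction \<phi>) auto

lemma card_insert_Un_le: "finite (A \<union> B) \<Longrightarrow> card (insert x (A \<union> B)) \<le> Suc (card A + card B)"
  using card_Un_le[of A B] by (simp add: card_insert_if)

lemma card_ltl_subformulas_le: "card (ltl_subformulas \<phi>) \<le> ltl_size \<phi>"
proof (induction \<phi>)
  case (LAnd f g)
  then show ?case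
    using card_insert_Un_le[of "ltl_subformulas f" "ltl_subformulas g" "LAnd f g"]
    by (simp add: finite_ltl_subformulas)
next
  case (LUntil f g)
  then show ?case
    using card_insert_Un_le[of "ltl_subformulas f" "ltl_subformulas g" "LUntil f g"]
    by (simp add: finite_ltl_subformulas)
qed (simp_all add: card_insert_if finite_ltl_subformulas)

lemma ltl_subformulas_self [simp]: "\<phi> \<in> ltl_subformulas \<phi>"
  by (cases \<phi>) auto

lemma word_sat_eq_if_next_subformulas_eq:
  assumes "w i = w' i"
    and "\<forall>\<chi>\<in>ltl_subformulas \<phi>. word_sat w (Suc i) \<chi> = word_sat w' (Suc i) \<chi>"
  shows "word_sat w i \<phi> = word_sat w' i \<phi>"
  using assms(2)
proof (induction \<phi>)
  case (LUntil f g)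
  then show ?case unfolding word_sat_Until_unfold[of _ i] by simp
qed (use assms(1) in auto)

lemma card_le_exp_card_ltl_subformulas:
  fixes w :: "'t \<Rightarrow> nat set \<Rightarrow> nat \<Rightarrow> nat set"
  assumes head: "\<And>t a. w t a 0 = a"
    and tail: "\<And>t a b j. w t a (Suc j) = w t b (Suc j)"
    and inj: "inj_on (\<lambda>t a. word_sat (w t a) 0 \<phi>) A"
  shows "card A \<le> 2 ^ card (ltl_subformulas \<phi>)"
proof -
  define next_type where "next_type t = {\<chi> \<in> ltl_subformulas \<phi>. word_sat (w t {}) 1 \<chi>}" for t
  have tail_sat: "word_sat (w t a) 1 \<chi> = word_sat (w t {}) 1 \<chi>" for t a \<chi>
    by (rule word_sat_cong) (metis One_nat_def Suc_le_D tail)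
  have "inj_on next_type A"
  proof (rule inj_onI)
    fix t t' assume "t \<in> A" "t' \<in> A" and same_type: "next_type t = next_type t'"
    have "word_sat (w t a) 0 \<phi> = word_sat (w t' a) 0 \<phi>" for a
    proof (rule word_sat_eq_if_next_subformulas_eq)
      show "w t a 0 = w t' a 0" by (simp add: head)
      show "\<forall>\<chi>\<in>ltl_subformulas \<phi>. word_sat (w t a) (Suc 0) \<chi> = word_sat (w t' a) (Suc 0) \<chi>"
        using same_type tail_sat by (auto simp: next_type_def set_eq_iff)
    qed
    then show "t = t'" using inj \<open>t \<in> A\<close> \<open>t' \<in> A\<close> by (auto dest: inj_onD)
  qed
  then have "card A \<le> card (Pow (ltl_subformulas \<phi>))"
    by (rule card_inj_on_le) (auto simp: next_type_def finite_ltl_subformulas)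
  then show ?thesis by (simp add: card_Pow finite_ltl_subformulas)
qed

definition stutter :: "'a list \<Rightarrow> nat \<Rightarrow> 'a" where
  "stutter xs i = xs ! min i (length xs - 1)"

lemma stutter_Cons_0 [simp]: "stutter (a # ys) 0 = a"
  by (simp add: stutter_def)

lemma stutter_Cons_Suc: "ys \<noteq> [] \<Longrightarrow> stutter (a # ys) (Suc j) = stutter ys j"
  by (cases ys) (auto simp: stutter_def min_def)

lemma range_stutter:
  assumes "xs \<noteq> []"
  shows "range (stutter xs) = set xs"
proof
  show "range (stutter xs) \<subseteq> set xs"
    using assms by (auto simp: stutter_def min_less_iff_disj intro!: nth_mem)
  show "set xs \<subseteq> range (stutter xs)"
  proof
    fix x assume "x \<in> set xs"
    then obtain k where "k < length xs" "x = xs ! k" by (auto simp: in_set_conv_nth)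
    then have "x = stutter xs k" by (simp add: stutter_def)
    then show "x \<in> range (stutter xs)" by simp
  qed
qed

definition line_kripke :: "nat set \<Rightarrow> nat set list \<Rightarrow> kripke" where
  "line_kripke P xs = \<lparr>AP = P, St = {..<length xs},
     Tr = {(i, Suc i) | i. Suc i < length xs} \<union> {(length xs - 1, length xs - 1)},
     Lab = (!) xs, Init = 0\<rparr>"

lemma finite_kripke_line_kripke:
  assumes "finite P" "xs \<noteq> []" "set xs \<subseteq> Pow P"
  shows "finite_kripke (line_kripke P xs)"
proof -
  have "\<exists>t. (s, t) \<in> Tr (line_kripke P xs)" if "s < length xs" for s
    using that by (cases "Suc s < length xs") (auto simp: line_kripke_def)
  moreover have "xs ! s \<subseteq> P" if "s < length xs" for s
    using assms(3) nth_mem[OF that] by blast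
  ultimately show ?thesis
    using assms by (auto simp: finite_kripke_def kripke_structure_def line_kripke_def)
qed

lemma initial_path_line_kripke_iff:
  assumes "xs \<noteq> []"
  shows "initial_path (line_kripke P xs) \<pi> \<longleftrightarrow> \<pi> = (\<lambda>i. min i (length xs - 1))"
proof
  assume path: "initial_path (line_kripke P xs) \<pi>"
  have "\<pi> i = min i (length xs - 1)" for i
  proof (induction i)
    case (Suc i)
    have "(\<pi> i, \<pi> (Suc i)) \<in> Tr (line_kripke P xs)" using path by (simp add: initial_path_def)
    then show ?case using Suc assms by (auto simp: line_kripke_def)
  qed (use path in \<open>simp add: initial_path_def line_kripke_def\<close>)
  then show "\<pi> = (\<lambda>i. min i (length xs - 1))" ..
qed (auto simp: initial_path_def line_kripke_def min_def)

lemma ltl_models_line_kripke: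
  assumes "xs \<noteq> []"
  shows "ltl_models (line_kripke P xs) \<phi> \<longleftrightarrow> word_sat (stutter xs) 0 \<phi>"
  unfolding ltl_models_def initial_path_line_kripke_iff[OF assms] ltl_sat_eq_word_sat
  by (simp add: line_kripke_def stutter_def[abs_def])

definition hs_iff :: "hs \<Rightarrow> hs \<Rightarrow> hs" where
  "hs_iff f g = HAnd (HNot (HAnd f (HNot g))) (HNot (HAnd g (HNot f)))"

definition hs_at_begin :: "nat \<Rightarrow> hs" where
  "hs_at_begin p = HDia RAbar (HProp p)"

definition hs_at_end :: "nat \<Rightarrow> hs" where
  "hs_at_end p = HDia RA (HProp p)"

fun psi :: "nat \<Rightarrow> hs" where
  "psi 0 = hs_iff (hs_at_begin 0) (hs_at_end 0)"
| "psi (Suc n) = HNot (HAnd (hs_iff (hs_at_begin (Suc n)) (hs_at_end (Suc n))) (HNot (psi n)))"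

lemma hs_size_psi: "hs_size (psi n) = 18 * n + 15"
  by (induction n) (auto simp: hs_iff_def hs_at_begin_def hs_at_end_def)

lemma hs_props_psi: "hs_props (psi n) = {0..n}"
  by (induction n) (auto simp: hs_iff_def hs_at_begin_def hs_at_end_def)

lemma hs_sat_psi:
  "hs_sat K \<pi> x y (psi n) \<longleftrightarrow>
     ((\<forall>j\<in>{1..n}. j \<in> Lab K (\<pi> x) \<longleftrightarrow> j \<in> Lab K (\<pi> y)) \<longrightarrow>
       (0 \<in> Lab K (\<pi> x) \<longleftrightarrow> 0 \<in> Lab K (\<pi> y)))"
  by (induction n) (auto simp: hs_iff_def hs_at_begin_def hs_at_end_def atLeastAtMostSuc_conv)

lemma hs_lin_models_line_kripke_psi:
  assumes "xs \<noteq> []"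
  shows "hs_lin_models (line_kripke P xs) (psi n) \<longleftrightarrow>
    (\<forall>W\<in>set xs. (\<forall>j\<in>{1..n}. j \<in> hd xs \<longleftrightarrow> j \<in> W) \<longrightarrow> (0 \<in> hd xs \<longleftrightarrow> 0 \<in> W))"
proof -
  have "Lab (line_kripke P xs) (min i (length xs - 1)) = stutter xs i" for i
    by (simp add: line_kripke_def stutter_def)
  moreover have "Lab (line_kripke P xs) 0 = hd xs"
    using assms by (cases xs) (auto simp: line_kripke_def)
  ultimately show ?thesis
    unfolding hs_lin_models_def initial_path_line_kripke_iff[OF assms] hs_sat_psi
      range_stutter[OF assms, symmetric]
    by simp
qed

definition mark :: "nat set set \<Rightarrow> nat set \<Rightarrow> nat set" where
  "mark T v = (if v \<in> T then insert 0 v else v)"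

lemma hs_lin_models_psi_mark:
  assumes L: "set L = Pow {1..n}" and v: "v \<subseteq> {1..n}"
  shows "hs_lin_models (line_kripke P (insert 0 v # map (mark T) L)) (psi n) \<longleftrightarrow> v \<in> T"
proof -
  have "(\<forall>j\<in>{1..n}. j \<in> insert 0 v \<longleftrightarrow> j \<in> mark T u) \<longleftrightarrow> u = v" if "u \<subseteq> {1..n}" for u
    using that v by (auto simp: mark_def)
  moreover have "0 \<in> mark T u \<longleftrightarrow> u \<in> T" if "u \<subseteq> {1..n}" for u
    using that by (auto simp: mark_def)
  ultimately show ?thesis
    using v by (auto simp: hs_lin_models_line_kripke_psi L)
qed

lemma ltl_size_ge_if_equiv_psi:
  assumes equiv: "hs_ltl_equiv (psi n) \<phi>"
  shows "2 ^ n \<le> ltl_size \<phi>"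
proof -
  obtain L where L: "set L = Pow {1..n}"
    using finite_list[of "Pow {1..n}"] by auto
  then have "L \<noteq> []" by auto
  define w where "w T a = stutter (a # map (mark T) L)" for T a
  have sat: "word_sat (w T (insert 0 v)) 0 \<phi> \<longleftrightarrow> v \<in> T" if v: "v \<subseteq> {1..n}" for T v
  proof -
    let ?K = "line_kripke {0..n} (insert 0 v # map (mark T) L)"
    have "finite_kripke ?K"
      by (rule finite_kripke_line_kripke) (use L v in \<open>auto simp: mark_def\<close>)
    then have "ltl_models ?K \<phi> \<longleftrightarrow> hs_lin_models ?K (psi n)"
      using equiv by (simp add: hs_ltl_equiv_def hs_props_psi line_kripke_def)
    then show ?thesis
      by (simp add: w_def ltl_models_line_kripke hs_lin_models_psi_mark[OF L v])
  qed
  have inj: "inj_on (\<lambda>T a. word_sat (w T a) 0 \<phi>) (Pow (Pow {1..n}))"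
  proof (rule inj_onI)
    fix T T' assume "T \<in> Pow (Pow {1..n})" "T' \<in> Pow (Pow {1..n})"
      and same: "(\<lambda>a. word_sat (w T a) 0 \<phi>) = (\<lambda>a. word_sat (w T' a) 0 \<phi>)"
    moreover have "v \<in> T \<longleftrightarrow> v \<in> T'" if "v \<subseteq> {1..n}" for v
      using sat[OF that, of T] sat[OF that, of T'] fun_cong[OF same, of "insert 0 v"] by simp
    ultimately show "T = T'" by auto
  qed
  have "card (Pow (Pow {1..n})) \<le> 2 ^ card (ltl_subformulas \<phi>)"
    by (rule card_le_exp_card_ltl_subformulas[OF _ _ inj])
      (simp_all add: w_def stutter_Cons_Suc \<open>L \<noteq> []\<close>)
  then have "2 ^ n \<le> card (ltl_subformulas \<phi>)"
    by (simp add: card_Pow)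
  with card_ltl_subformulas_le[of \<phi>] show ?thesis
    by linarith
qed

lemma linear_le_exp2: "\<exists>m. a + b * m \<le> (2::nat) ^ m"
proof -
  define t where "t = a + 2 * b + 1"
  have "a + b * (2 * t) \<le> t * t"
    unfolding t_def by (simp add: algebra_simps)
  also have "\<dots> \<le> 2 ^ t * 2 ^ t"
    using less_exp[of t] by (intro mult_mono) auto
  also have "\<dots> = 2 ^ (2 * t)"
    by (simp add: mult_2 power_add)
  finally show ?thesis by blast
qed

lemma poly_less_exp2: "\<exists>n\<ge>1. c * (a * n + b) ^ k < (2::nat) ^ n"
proof -
  obtain m where m: "c + (a + b) * k + k * m \<le> 2 ^ m"
    using linear_le_exp2 by blast
  define n :: nat where "n = 2 ^ m"
  have "n \<ge> 1"
    by (simp add: n_def)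
  then have "a * n + b \<le> (a + b) * n"
    by (simp add: algebra_simps)
  also have "\<dots> \<le> 2 ^ (a + b) * n"
    using less_exp[of "a + b"] by simp
  also have "\<dots> = 2 ^ (a + b + m)"
    by (simp add: n_def power_add)
  finally have "c * (a * n + b) ^ k \<le> c * 2 ^ ((a + b + m) * k)"
    by (simp add: power_mono power_mult)
  also have "\<dots> < 2 ^ c * 2 ^ ((a + b + m) * k)"
    using less_exp[of c] by simp
  also have "\<dots> \<le> 2 ^ n"
    using m by (simp add: n_def flip: power_add) (simp add: algebra_simps)
  finally show ?thesis
    using \<open>n \<ge> 1\<close> by blast
qed

theorem theorem3p5:
  shows "\<exists>\<psi> :: nat \<Rightarrow> hs. \<forall>c k :: nat. \<exists>n\<ge>1. \<forall>\<phi>.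
           hs_ltl_equiv (\<psi> n) \<phi> \<longrightarrow> ltl_size \<phi> > c * hs_size (\<psi> n) ^ k"
proof (intro exI[of _ psi] allI)
  fix c k :: nat
  obtain n where "n \<ge> 1" and "c * (18 * n + 15) ^ k < 2 ^ n"
    using poly_less_exp2 by blast
  then show "\<exists>n\<ge>1. \<forall>\<phi>. hs_ltl_equiv (psi n) \<phi> \<longrightarrow> ltl_size \<phi> > c * hs_size (psi n) ^ k"
    using ltl_size_ge_if_equiv_psi by (metis hs_size_psi order_less_le_trans)
qed

end
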